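(* Suppose $\Phi$ has type $D_m$ with $m\ge3$, and let $\lambda\in\mathfrak h_K^*$ with $\lambda(p^n\mathfrak h_R)\subseteq R$ be a weight which is not regular integral. Then there exist $\beta_1,\dots,\beta_r\in\Delta$ such that $(s_{\beta_{i-1}}\cdots s_{\beta_1}\cdot\lambda)(h_{\beta_i})\notin\mathbb N_0$ for all $1\le i\le r$, and $s_{\beta_r}\cdots s_{\beta_1}\cdot\lambda\in S_{\mathfrak g}$.
   Context: $\mathfrak g$ is an $\mathcal O_F$-lattice ($F/\mathbb Q_p$ finite, $p$ odd) in a split simple $F$-Lie algebra with Chevalley basis, root system $\Phi$, simple roots $\Delta$, Cartan $\mathfrak h$; $K/F$ finite with ring of integers $R$; $n\in\mathbb N_0$ fixed; $\lambda(h_\alpha)=\langle\lambda,\alpha^\vee\rangle$. Labelling: for $m\ge4$, $\Delta=\{\alpha_1,\dots,\alpha_m\}$ with $\alpha_i$ adjacent to $\alpha_{i+1}$ for $i\le m-2$ and $\alpha_{m-2}$ adjacent to $\alpha_m$ (standard $D_m$ diagram, $\alpha_{m-1},\alpha_m$ the two end nodes at the fork); type $D_3$ means type $A_3$ with simple roots labelled so that $\alpha_1$ is the middle node, adjacent to $\alpha_2$ and $\alpha_3$. $W$ is the Weyl group, $\rho$ half the sum of positive roots, $w\cdot\lambda=w(\lambda+\rho)-\rho$, $\Phi_\lambda=\{\alpha\in\Phi:\langle\lambda+\rho,\alpha^\vee\rangle\in\mathbb Z\}$. $\lambda$ is regular integral if $\langle\lambda+\rho,\alpha^\vee\rangle\in\mathbb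 Z\setminus\{0\}$ for all $\alpha\in\Phi$. A subset of $\Delta$ is connected if its full subgraph of the Dynkin diagram is connected. $S_{\mathfrak g}$ is the set of $\lambda\in\mathfrak h_K^*$ with $\lambda(p^n\mathfrak h_R)\subseteq R$ such that: $\lambda$ is not dominant integral (i.e. not all $\lambda(h_\alpha)\in\mathbb N_0$, $\alpha\in\Delta$); $\Delta\setminus\Phi_\lambda$ is either empty or a connected subset of $\Delta$ containing $\alpha_1$; and $\langle\lambda+\rho,\alpha^\vee\rangle\notin\mathbb Z_{<0}$ for all $\alpha\in\Delta$. *)

theory Defs
  imports "HOL-Computational_Algebra.Primes"
begin

text \<open>For m = 3 this gives
  alpha_1 adjacent to alpha_2 and alpha_3 (the D_3 = A_3 convention of the paper).\<close>

definition D_adj :: "nat \<Rightarrow> nat \<Rightarrow> nat \<Rightarrow> bool" where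
  "D_adj m i j \<longleftrightarrow> i \<in> {1..m} \<and> j \<in> {1..m} \<and>
     ((1 \<le> i \<and> i \<le> m - 2 \<and> j = i + 1) \<or> (1 \<le> j \<and> j \<le> m - 2 \<and> i = j + 1) \<or>
      (i = m - 2 \<and> j = m) \<or> (j = m - 2 \<and> i = m))"

definition D_cartan :: "nat \<Rightarrow> nat \<Rightarrow> nat \<Rightarrow> int" where
  "D_cartan m i j = (if i = j then 2 else if D_adj m i j then -1 else 0)"

definition unit_vec :: "nat \<Rightarrow> nat \<Rightarrow> int" where
  "unit_vec i = (\<lambda>k. if k = i then 1 else 0)"

definition root_refl :: "nat \<Rightarrow> nat \<Rightarrow> (nat \<Rightarrow> int) \<Rightarrow> (nat \<Rightarrow> int)" where
  "root_refl m j \<beta> = (\<lambda>k. \<beta> k - (if k = j then (\<Sum>i\<in>{1..m}. \<beta> i * D_cartan m i j) else 0))"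

text \<open>The root system Phi = W . Delta, in simple-root coordinates.\<close>
inductive_set D_roots :: "nat \<Rightarrow> (nat \<Rightarrow> int) set" for m where
  simple: "i \<in> {1..m} \<Longrightarrow> unit_vec i \<in> D_roots m"
| refl: "\<beta> \<in> D_roots m \<Longrightarrow> j \<in> {1..m} \<Longrightarrow> root_refl m j \<beta> \<in> D_roots m"

text \<open>A weight lambda is encoded by c with c i = lambda(h_{alpha_i}), i in 1..m.
  Since D_m is simply laced, for alpha = sum k_i alpha_i we have
  alpha^vee = sum k_i alpha_i^vee, so <mu, alpha^vee> = sum k_i mu(h_{alpha_i}).\<close>
definition pair_rho :: "nat \<Rightarrow> (nat \<Rightarrow> 'k::field_char_0) \<Rightarrow> (nat \<Rightarrow> int) \<Rightarrow> 'k" where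
  "pair_rho m c \<alpha> = (\<Sum>i\<in>{1..m}. of_int (\<alpha> i) * (c i + 1))"

definition regular_integral :: "nat \<Rightarrow> (nat \<Rightarrow> 'k::field_char_0) \<Rightarrow> bool" where
  "regular_integral m c \<longleftrightarrow> (\<forall>\<alpha>\<in>D_roots m. pair_rho m c \<alpha> \<in> \<int> \<and> pair_rho m c \<alpha> \<noteq> 0)"

definition dot_refl :: "nat \<Rightarrow> nat \<Rightarrow> (nat \<Rightarrow> 'k::field_char_0) \<Rightarrow> (nat \<Rightarrow> 'k)" where
  "dot_refl m j c = (\<lambda>i. c i - (c j + 1) * of_int (D_cartan m j i))"

text \<open>s_{beta_k} ... s_{beta_1} . lambda for the list [beta_1, ..., beta_k].\<close>
definition dot_word :: "nat \<Rightarrow> nat list \<Rightarrow> (nat \<Rightarrow> 'k::field_char_0) \<Rightarrow> (nat \<Rightarrow> 'k)" where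
  "dot_word m bs c = foldl (\<lambda>d j. dot_refl m j d) c bs"

definition integral_cond :: "nat \<Rightarrow> nat \<Rightarrow> nat \<Rightarrow> 'k::field_char_0 set \<Rightarrow> (nat \<Rightarrow> 'k) \<Rightarrow> bool" where
  "integral_cond m p n R c \<longleftrightarrow> (\<forall>i\<in>{1..m}. of_nat p ^ n * c i \<in> R)"

definition D_connected :: "nat \<Rightarrow> nat set \<Rightarrow> bool" where
  "D_connected m S \<longleftrightarrow> S \<subseteq> {1..m} \<and> S \<noteq> {} \<and>
     (\<forall>i\<in>S. \<forall>j\<in>S. (i, j) \<in> {(a, b). a \<in> S \<and> b \<in> S \<and> D_adj m a b}\<^sup>*)"

text \<open>Delta \ Phi_lambda: simple roots alpha_i with <lambda+rho, alpha_i^vee> not integral.\<close>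
definition nonint_simple :: "nat \<Rightarrow> (nat \<Rightarrow> 'k::field_char_0) \<Rightarrow> nat set" where
  "nonint_simple m c = {i\<in>{1..m}. c i + 1 \<notin> \<int>}"

definition S_g :: "nat \<Rightarrow> nat \<Rightarrow> nat \<Rightarrow> 'k::field_char_0 set \<Rightarrow> (nat \<Rightarrow> 'k) set" where
  "S_g m p n R = {c. integral_cond m p n R c
     \<and> \<not> (\<forall>i\<in>{1..m}. c i \<in> \<nat>)
     \<and> (nonint_simple m c = {} \<or> (D_connected m (nonint_simple m c) \<and> 1 \<in> nonint_simple m c))
     \<and> (\<forall>i\<in>{1..m}. \<forall>k::int. k < 0 \<longrightarrow> c i + 1 \<noteq> of_int k)}"

definition subring :: "'k::field_char_0 set \<Rightarrow> bool" where
  "subring R \<longleftrightarrow> 0 \<in> R \<and> 1 \<in> R \<and> (\<forall>x\<in>R. \<forall>y\<in>R. x + y \<in> R \<and> x - y \<in> R \<and> x * y \<in> R)"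

end

theory Submission
  imports Defs "HOL-Library.FuncSet"
begin

text \<open>Write \<open>\<lambda> + \<rho>\<close> in the orthonormal coordinates \<open>x\<^sub>1, \<dots>, x\<^sub>m\<close> of \<open>D\<^sub>m\<close>: the roots pair
  with it as \<open>\<plusminus>x\<^sub>k \<plusminus> x\<^sub>l\<close>, and each simple reflection acts as a signed permutation of the
  \<open>x\<^sub>k\<close>. Two descents, each using only reflections at \<open>\<alpha>\<^sub>j\<close> with \<open>\<lambda>(h\<^sub>\<alpha>\<^sub>j) \<notin> \<nat>\<^sub>0\<close>,
  produce the required weight.

  First, view the Dynkin diagram as a tree rooted at \<open>\<alpha>\<^sub>1\<close>. If \<open>\<Delta> \<setminus> \<Phi>\<^sub>\<lambda>\<close> is neither empty nor
  a connected set containing \<open>\<alpha>\<^sub>1\<close>, it contains some \<open>\<alpha>\<^sub>j \<noteq> \<alpha>\<^sub>1\<close> whose parent is integral;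
  reflecting at \<open>\<alpha>\<^sub>j\<close> makes the parent non-integral and can make only children of \<open>\<alpha>\<^sub>j\<close>
  integral, so a suitably weighted count of \<open>\<Delta> \<setminus> \<Phi>\<^sub>\<lambda>\<close> increases.

  Second, while some \<open>\<langle>\<lambda> + \<rho>, \<alpha>\<^sub>j\<^sup>\<or>\<rangle>\<close> is a negative integer, reflect at \<open>\<alpha>\<^sub>j\<close>: this keeps
  \<open>\<Delta> \<setminus> \<Phi>\<^sub>\<lambda>\<close> and raises \<open>\<langle>\<lambda> + \<rho>, \<rho>\<rangle>\<close> by a positive integer, which can happen only finitely
  often because the coordinates stay among the original ones up to sign.

  The result is not dominant integral, since dominant integral weights are regular integral
  and regular integrality is invariant under the dot action.\<close>

lemma D_adj_sym: "D_adj m i j = D_adj m j i"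
  unfolding D_adj_def by auto

lemma D_cartan_sym: "D_cartan m i j = D_cartan m j i"
  unfolding D_cartan_def using D_adj_sym by auto

lemma D_cartan_diag [simp]: "D_cartan m j j = 2"
  unfolding D_cartan_def by simp

lemma D_cartan_explicit:
  assumes "3 \<le> m" "i \<in> {1..m}" "j \<in> {1..m}"
  shows "D_cartan m j i =
    (if i = j then 2
     else if (i < m \<and> j < m \<and> (i = Suc j \<or> j = Suc i)) \<or>
             (i = m \<and> j = m - 2) \<or> (j = m \<and> i = m - 2) then -1
     else 0)"
  using assms unfolding D_cartan_def D_adj_def by auto

lemma dot_refl_shifted: "dot_refl m j c i + 1 = (c i + 1) - (c j + 1) * of_int (D_cartan m j i)"
  unfolding dot_refl_def by simp

lemma dot_word_Nil [simp]: "dot_word m [] c = c"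
  unfolding dot_word_def by simp

lemma dot_word_Cons [simp]: "dot_word m (j # bs) c = dot_word m bs (dot_refl m j c)"
  unfolding dot_word_def by simp

lemma dot_word_append: "dot_word m (xs @ ys) c = dot_word m ys (dot_word m xs c)"
  unfolding dot_word_def by simp

definition admissible_word :: "nat \<Rightarrow> nat list \<Rightarrow> (nat \<Rightarrow> 'k::field_char_0) \<Rightarrow> bool" where
  "admissible_word m bs c \<longleftrightarrow>
     set bs \<subseteq> {1..m} \<and> (\<forall>i<length bs. dot_word m (take i bs) c (bs ! i) \<notin> \<nat>)"

lemma admissible_word_Nil [simp]: "admissible_word m [] c"
  unfolding admissible_word_def by simp

lemma admissible_word_Cons:
  "admissible_word m (j # bs) c \<longleftrightarrow>
     j \<in> {1..m} \<and> c j \<notin> \<nat> \<and> admissible_word m bs (dot_refl m j c)"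
  unfolding admissible_word_def by (auto simp: less_Suc_eq_0_disj)

lemma admissible_word_append:
  "admissible_word m (xs @ ys) c \<longleftrightarrow> admissible_word m xs c \<and> admissible_word m ys (dot_word m xs c)"
  by (induction xs arbitrary: c) (auto simp: admissible_word_Cons)

text \<open>Coordinates of \<open>\<lambda> + \<rho>\<close> in the orthonormal basis \<open>\<epsilon>\<^sub>1, \<dots>, \<epsilon>\<^sub>m\<close> with
  \<open>\<alpha>\<^sub>i = \<epsilon>\<^sub>i - \<epsilon>\<^sub>i\<^sub>+\<^sub>1\<close> for \<open>i < m\<close> and \<open>\<alpha>\<^sub>m = \<epsilon>\<^sub>m\<^sub>-\<^sub>1 + \<epsilon>\<^sub>m\<close>; \<open>coroot_eval m x i\<close> is the value
  of \<open>\<alpha>\<^sub>i\<^sup>\<or>\<close> on the vector with coordinates \<open>x\<close>.\<close>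

definition eps_coord :: "nat \<Rightarrow> (nat \<Rightarrow> 'k::field_char_0) \<Rightarrow> nat \<Rightarrow> 'k" where
  "eps_coord m c k = (\<Sum>i\<in>{k..<m}. c i + 1) + ((c m + 1) - (c (m - 1) + 1)) / 2"

definition coroot_eval :: "nat \<Rightarrow> (nat \<Rightarrow> 'k::field_char_0) \<Rightarrow> nat \<Rightarrow> 'k" where
  "coroot_eval m x i = (if i < m then x i - x (Suc i) else x (m - 1) + x m)"

lemma coroot_eval_eps_coord:
  assumes "2 \<le> m" "i \<in> {1..m}"
  shows "coroot_eval m (eps_coord m c) i = c i + 1"
proof (cases "i < m")
  case True
  then show ?thesis unfolding coroot_eval_def eps_coord_def by (simp add: sum.atLeast_Suc_lessThan)
next
  case False
  with assms have "i = m" "{m - 1..<m} = {m - 1}" by auto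
  then show ?thesis unfolding coroot_eval_def eps_coord_def by (simp add: field_simps)
qed

lemma eps_coord_unique:
  assumes m2: "2 \<le> m" and x: "\<forall>i\<in>{1..m}. coroot_eval m x i = c i + 1" and k: "k \<in> {1..m}"
  shows "x k = eps_coord m c k"
proof -
  from k have "k \<le> m" "1 \<le> k" by auto
  then show ?thesis
  proof (induction k rule: inc_induct)
    case base
    have "x (m - 1) - x m = c (m - 1) + 1" "x (m - 1) + x m = c m + 1"
      using x[rule_format, of "m - 1"] x[rule_format, of m] m2 by (simp_all add: coroot_eval_def)
    then have "x m = ((c m + 1) - (c (m - 1) + 1)) / 2" by (simp add: field_simps)
    then show ?case by (simp add: eps_coord_def)
  next
    case (step n)
    have "x n - x (Suc n) = c n + 1" using x[rule_format, of n] step by (simp add: coroot_eval_def)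
    then show ?case using step by (simp add: eps_coord_def sum.atLeast_Suc_lessThan algebra_simps)
  qed
qed

text \<open>The simple reflection \<open>s\<^sub>j\<close> in \<open>\<epsilon>\<close>-coordinates: it swaps \<open>\<epsilon>\<^sub>j, \<epsilon>\<^sub>j\<^sub>+\<^sub>1\<close> for \<open>j < m\<close>, and
  \<open>s\<^sub>m\<close> maps \<open>\<epsilon>\<^sub>m\<^sub>-\<^sub>1 \<mapsto> -\<epsilon>\<^sub>m\<close>, \<open>\<epsilon>\<^sub>m \<mapsto> -\<epsilon>\<^sub>m\<^sub>-\<^sub>1\<close>.\<close>

definition refl_perm :: "nat \<Rightarrow> nat \<Rightarrow> nat \<Rightarrow> nat" where
  "refl_perm m j k =
     (if j < m then (if k = j then Suc j else if k = Suc j then j else k)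
      else (if k = m - 1 then m else if k = m then m - 1 else k))"

definition refl_sign :: "nat \<Rightarrow> nat \<Rightarrow> nat \<Rightarrow> 'k::field_char_0" where
  "refl_sign m j k = (if j = m \<and> (k = m - 1 \<or> k = m) then -1 else 1)"

definition signed_refl :: "nat \<Rightarrow> nat \<Rightarrow> (nat \<Rightarrow> 'k::field_char_0) \<Rightarrow> nat \<Rightarrow> 'k" where
  "signed_refl m j x k = refl_sign m j k * x (refl_perm m j k)"

lemma refl_perm_involutive: "refl_perm m j (refl_perm m j k) = k"
  unfolding refl_perm_def by auto

lemma refl_perm_range: "2 \<le> m \<Longrightarrow> j \<in> {1..m} \<Longrightarrow> k \<in> {1..m} \<Longrightarrow> refl_perm m j k \<in> {1..m}"
  unfolding refl_perm_def by auto

lemma refl_sign_cases: "refl_sign m j k = 1 \<or> refl_sign m j k = -1"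
  unfolding refl_sign_def by auto

lemma signed_refl_cases:
  "signed_refl m j x k = x (refl_perm m j k) \<or> signed_refl m j x k = - x (refl_perm m j k)"
  unfolding signed_refl_def refl_sign_def by simp

lemma coroot_eval_signed_refl:
  assumes "3 \<le> m" "j \<in> {1..m}" "i \<in> {1..m}"
  shows "coroot_eval m (signed_refl m j x) i =
    coroot_eval m x i - coroot_eval m x j * of_int (D_cartan m j i)"
proof (cases "j < m")
  case True
  then have "signed_refl m j x k = (if k = j then x (Suc j) else if k = Suc j then x j else x k)" for k
    unfolding signed_refl_def refl_sign_def refl_perm_def by simp
  with True assms show ?thesis by (auto simp: coroot_eval_def D_cartan_explicit)
next
  case False
  with assms have "j = m"
    "signed_refl m m x k = (if k = m - 1 then - x m else if k = m then - x (m - 1) else x k)" for k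
    unfolding signed_refl_def refl_sign_def refl_perm_def by auto
  with assms show ?thesis by (auto simp: coroot_eval_def D_cartan_explicit)
qed

lemma eps_coord_dot_refl:
  assumes m3: "3 \<le> m" and j: "j \<in> {1..m}" and k: "k \<in> {1..m}"
  shows "eps_coord m (dot_refl m j c) k = signed_refl m j (eps_coord m c) k"
proof (rule eps_coord_unique[symmetric])
  show "\<forall>i\<in>{1..m}. coroot_eval m (signed_refl m j (eps_coord m c)) i = dot_refl m j c i + 1"
    using m3 j by (simp add: coroot_eval_signed_refl coroot_eval_eps_coord dot_refl_shifted)
qed (use m3 k in auto)

lemma pair_rho_unit_vec:
  assumes "i \<in> {1..m}"
  shows "pair_rho m c (unit_vec i) = c i + 1"
proof -
  have "pair_rho m c (unit_vec i) = (\<Sum>k\<in>{1..m}. if k = i then c k + 1 else 0)"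
    unfolding pair_rho_def unit_vec_def by (rule sum.cong) auto
  then show ?thesis using assms by simp
qed

lemma pair_rho_dot_refl:
  assumes j: "j \<in> {1..m}"
  shows "pair_rho m (dot_refl m j c) \<beta> = pair_rho m c (root_refl m j \<beta>)"
proof -
  define S where "S = (\<Sum>i\<in>{1..m}. \<beta> i * D_cartan m i j)"
  have S: "(\<Sum>i\<in>{1..m}. of_int (\<beta> i) * of_int (D_cartan m j i)) = (of_int S :: 'a)"
    unfolding S_def of_int_sum of_int_mult by (rule sum.cong) (simp_all add: D_cartan_sym[of m j])
  have "pair_rho m (dot_refl m j c) \<beta> =
      (\<Sum>i\<in>{1..m}. of_int (\<beta> i) * (c i + 1) - (c j + 1) * (of_int (\<beta> i) * of_int (D_cartan m j i)))"
    unfolding pair_rho_def dot_refl_shifted by (rule sum.cong) (auto simp: algebra_simps)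
  also have "\<dots> = pair_rho m c \<beta> - (c j + 1) * of_int S"
    unfolding pair_rho_def S[symmetric] by (simp only: sum_subtractf sum_distrib_left)
  also have "\<dots> = (\<Sum>i\<in>{1..m}. of_int (\<beta> i) * (c i + 1) - (if i = j then of_int S * (c j + 1) else 0))"
    unfolding pair_rho_def using j by (simp add: sum_subtractf mult.commute)
  also have "\<dots> = pair_rho m c (root_refl m j \<beta>)"
    unfolding pair_rho_def root_refl_def S_def by (rule sum.cong) (auto simp: algebra_simps)
  finally show ?thesis .
qed

lemma root_refl_involutive:
  assumes j: "j \<in> {1..m}"
  shows "root_refl m j (root_refl m j \<beta>) = \<beta>"
proof -
  define S where "S = (\<Sum>i\<in>{1..m}. \<beta> i * D_cartan m i j)"
  have "(\<Sum>i\<in>{1..m}. root_refl m j \<beta> i * D_cartan m i j)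
      = (\<Sum>i\<in>{1..m}. \<beta> i * D_cartan m i j - (if i = j then 2 * S else 0))"
    unfolding root_refl_def S_def by (rule sum.cong) (auto simp: algebra_simps)
  also have "\<dots> = - S" using j by (simp add: sum_subtractf S_def)
  finally show ?thesis
    unfolding root_refl_def[of m j "root_refl m j \<beta>"] by (auto simp: root_refl_def S_def)
qed

lemma regular_integral_dot_refl_imp:
  assumes j: "j \<in> {1..m}" and reg: "regular_integral m (dot_refl m j c)"
  shows "regular_integral m c"
  unfolding regular_integral_def
proof
  fix \<alpha> assume "\<alpha> \<in> D_roots m"
  then have "root_refl m j \<alpha> \<in> D_roots m" using j by (rule D_roots.refl)
  with reg have "pair_rho m (dot_refl m j c) (root_refl m j \<alpha>) \<in> \<int> \<and>
      pair_rho m (dot_refl m j c) (root_refl m j \<alpha>) \<noteq> 0"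
    unfolding regular_integral_def by blast
  then show "pair_rho m c \<alpha> \<in> \<int> \<and> pair_rho m c \<alpha> \<noteq> 0"
    unfolding pair_rho_dot_refl[OF j] root_refl_involutive[OF j] .
qed

lemma regular_integral_dot_word_imp:
  "set bs \<subseteq> {1..m} \<Longrightarrow> regular_integral m (dot_word m bs c) \<Longrightarrow> regular_integral m c"
  by (induction bs arbitrary: c) (auto intro: regular_integral_dot_refl_imp)

lemma pair_rho_root_eps_coord:
  assumes "\<alpha> \<in> D_roots m" and m3: "3 \<le> m"
  shows "\<exists>k l s t. k \<in> {1..m} \<and> l \<in> {1..m} \<and> k \<noteq> l \<and> (s = 1 \<or> s = -1) \<and> (t = 1 \<or> t = -1)
     \<and> pair_rho m c \<alpha> = s * eps_coord m c k + t * eps_coord m c l"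
  using assms(1)
proof (induction arbitrary: c rule: D_roots.induct)
  case (simple i)
  then have "pair_rho m c (unit_vec i) = coroot_eval m (eps_coord m c) i"
    using m3 by (simp add: pair_rho_unit_vec coroot_eval_eps_coord)
  show ?case
  proof (cases "i < m")
    case True
    with simple \<open>pair_rho m c (unit_vec i) = _\<close> show ?thesis
      by (intro exI[of _ i] exI[of _ "Suc i"] exI[of _ 1] exI[of _ "-1"]) (auto simp: coroot_eval_def)
  next
    case False
    with simple \<open>pair_rho m c (unit_vec i) = _\<close> m3 show ?thesis
      by (intro exI[of _ "m - 1"] exI[of _ m] exI[of _ 1] exI[of _ 1]) (auto simp: coroot_eval_def)
  qed
next
  case (refl \<beta> j)
  obtain k l s t where kl: "k \<in> {1..m}" "l \<in> {1..m}" "k \<noteq> l" "s = 1 \<or> s = -1" "t = 1 \<or> t = -1"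
    and eq: "pair_rho m (dot_refl m j c) \<beta> =
      s * eps_coord m (dot_refl m j c) k + t * eps_coord m (dot_refl m j c) l"
    using refl.IH by blast
  have "pair_rho m c (root_refl m j \<beta>) =
      (s * refl_sign m j k) * eps_coord m c (refl_perm m j k) +
      (t * refl_sign m j l) * eps_coord m c (refl_perm m j l)"
    using eq m3 kl refl.hyps(2)
    by (simp add: pair_rho_dot_refl eps_coord_dot_refl signed_refl_def mult.assoc)
  moreover have "refl_perm m j k \<noteq> refl_perm m j l" using kl(3) refl_perm_involutive by metis
  moreover have "s * refl_sign m j k = 1 \<or> s * refl_sign m j k = -1"
    "t * refl_sign m j l = 1 \<or> t * refl_sign m j l = -1"
    using kl(4,5) refl_sign_cases[of m j k] refl_sign_cases[of m j l] by auto
  moreover have "refl_perm m j k \<in> {1..m}" "refl_perm m j l \<in> {1..m}"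
    using refl_perm_range[OF _ refl.hyps(2)] kl(1,2) m3 by auto
  ultimately show ?case by blast
qed

lemma Nats_sum: "(\<And>x. x \<in> A \<Longrightarrow> f x \<in> \<nat>) \<Longrightarrow> sum f A \<in> \<nat>"
  by (induction A rule: infinite_finite_induct) auto

lemma Nats_add_nonzero:
  fixes a b :: "'a::semiring_char_0"
  shows "a \<in> \<nat> \<Longrightarrow> b \<in> \<nat> \<Longrightarrow> b \<noteq> 0 \<Longrightarrow> a + b \<noteq> 0"
  by (auto elim!: Nats_cases simp flip: of_nat_add)

lemma eps_coord_diff:
  "k \<le> l \<Longrightarrow> l \<le> m \<Longrightarrow> eps_coord m c k - eps_coord m c l = (\<Sum>i\<in>{k..<l}. c i + 1)"
  unfolding eps_coord_def by (simp add: sum.atLeastLessThan_concat[symmetric, of k l m] algebra_simps)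

lemma eps_coord_diff_dominant:
  assumes dom: "\<forall>i\<in>{1..m}. c i \<in> \<nat>" and kl: "1 \<le> k" "k \<le> l" "l \<le> m"
  shows "eps_coord m c k - eps_coord m c l \<in> \<nat>"
    and "k < l \<Longrightarrow> eps_coord m c k - eps_coord m c l \<noteq> 0"
proof -
  have shifted: "c i + 1 \<in> \<nat>" "c i + 1 \<noteq> 0" if "i \<in> {1..m}" for i
    using dom that Nats_add_nonzero[of "c i" 1] by auto
  show "eps_coord m c k - eps_coord m c l \<in> \<nat>"
    using kl shifted unfolding eps_coord_diff[OF kl(2,3)] by (intro Nats_sum) auto
  assume "k < l"
  then have "eps_coord m c k - eps_coord m c l = (\<Sum>i\<in>{Suc k..<l}. c i + 1) + (c k + 1)"
    unfolding eps_coord_diff[OF kl(2,3)] by (simp add: sum.atLeast_Suc_lessThan)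
  moreover have "(\<Sum>i\<in>{Suc k..<l}. c i + 1) + (c k + 1) \<noteq> 0"
    using kl shifted dom by (intro Nats_add_nonzero Nats_sum) auto
  ultimately show "eps_coord m c k - eps_coord m c l \<noteq> 0" by metis
qed

lemma eps_coord_add_dominant:
  assumes m3: "3 \<le> m" and dom: "\<forall>i\<in>{1..m}. c i \<in> \<nat>" and kl: "1 \<le> k" "k < l" "l \<le> m"
  shows "eps_coord m c k + eps_coord m c l \<in> \<nat>" and "eps_coord m c k + eps_coord m c l \<noteq> 0"
proof -
  define x where "x = eps_coord m c"
  have "x (m - 1) + x m = c m + 1"
    using coroot_eval_eps_coord[of m m c] m3 unfolding x_def by (simp add: coroot_eval_def)
  then have eq: "x k + x l = ((x k - x (m - 1)) + (x l - x m)) + (c m + 1)"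
    by (simp add: algebra_simps)
  have rest: "(x k - x (m - 1)) + (x l - x m) \<in> \<nat>"
    using kl eps_coord_diff_dominant(1)[OF dom] unfolding x_def by simp
  have last: "c m + 1 \<in> \<nat>" "c m + 1 \<noteq> 0"
    using dom m3 Nats_add_nonzero[of "c m" 1] by auto
  show "eps_coord m c k + eps_coord m c l \<in> \<nat>"
    using rest last unfolding x_def[symmetric] eq by simp
  show "eps_coord m c k + eps_coord m c l \<noteq> 0"
    unfolding x_def[symmetric] eq by (rule Nats_add_nonzero[OF rest last])
qed

lemma dominant_integral_imp_regular_integral:
  fixes c :: "nat \<Rightarrow> 'k::field_char_0"
  assumes m3: "3 \<le> m" and dom: "\<forall>i\<in>{1..m}. c i \<in> \<nat>"
  shows "regular_integral m c"
  unfolding regular_integral_def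
proof
  fix \<alpha> assume "\<alpha> \<in> D_roots m"
  then obtain k l s t where kl: "k \<in> {1..m}" "l \<in> {1..m}" "k \<noteq> l"
    and signs: "s = 1 \<or> s = -1" "t = 1 \<or> t = -1"
    and eq: "pair_rho m c \<alpha> = s * eps_coord m c k + t * eps_coord m c l"
    using pair_rho_root_eps_coord[OF _ m3] by blast
  define v where "v = (if t = s then eps_coord m c k + eps_coord m c l
                       else if k < l then eps_coord m c k - eps_coord m c l
                       else eps_coord m c l - eps_coord m c k)"
  have "v \<in> \<nat>" "v \<noteq> 0"
    using kl eps_coord_diff_dominant[OF dom] eps_coord_add_dominant[OF m3 dom]
      eps_coord_add_dominant[OF m3 dom, of l k]
    unfolding v_def by (auto simp: add.commute)
  moreover have "pair_rho m c \<alpha> = s * v \<or> pair_rho m c \<alpha> = - s * v"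
    using signs unfolding eq v_def by (auto simp: algebra_simps)
  ultimately show "pair_rho m c \<alpha> \<in> \<int> \<and> pair_rho m c \<alpha> \<noteq> 0"
    using signs Nats_subset_Ints by auto
qed

definition tree_parent :: "nat \<Rightarrow> nat \<Rightarrow> nat" where
  "tree_parent m i = (if i = m then m - 2 else i - 1)"

lemma tree_parent_props:
  assumes "3 \<le> m" "i \<in> {2..m}"
  shows "D_adj m (tree_parent m i) i" "D_adj m i (tree_parent m i)" "tree_parent m i \<in> {1..m}"
    "tree_parent m i < i"
  using assms unfolding tree_parent_def D_adj_def by auto

lemma D_adj_tree_parent: "D_adj m j i \<Longrightarrow> i = tree_parent m j \<or> j = tree_parent m i"
  unfolding D_adj_def tree_parent_def by auto

lemma connected_of_tree_parent_closed:
  assumes m3: "3 \<le> m" and sub: "N \<subseteq> {1..m}" and closed: "\<forall>j\<in>N. j \<noteq> 1 \<longrightarrow> tree_parent m j \<in> N"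
  shows "N = {} \<or> (D_connected m N \<and> 1 \<in> N)"
proof -
  define rel where "rel = {(a, b). a \<in> N \<and> b \<in> N \<and> D_adj m a b}"
  have to_root: "1 \<in> N \<and> (i, 1) \<in> rel\<^sup>* \<and> (1, i) \<in> rel\<^sup>*" if "i \<in> N" for i
    using that
  proof (induction i rule: less_induct)
    case (less i)
    show ?case
    proof (cases "i = 1")
      case False
      with less.prems sub have i: "i \<in> {2..m}" by force
      with less.prems False closed have p: "tree_parent m i \<in> N" by blast
      then have "(i, tree_parent m i) \<in> rel" "(tree_parent m i, i) \<in> rel"
        using tree_parent_props[OF m3 i] less.prems unfolding rel_def by auto
      with less.IH[OF tree_parent_props(4)[OF m3 i] p] show ?thesis
        by (meson converse_rtrancl_into_rtrancl rtrancl_into_rtrancl)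
    qed (use less.prems in simp)
  qed
  show ?thesis
  proof (cases "N = {}")
    case False
    then have "1 \<in> N" using to_root by blast
    moreover have "\<forall>i\<in>N. \<forall>j\<in>N. (i, j) \<in> rel\<^sup>*" using to_root by (meson rtrancl_trans)
    ultimately show ?thesis using sub False unfolding D_connected_def rel_def by blast
  qed simp
qed

definition nonint_rooted :: "nat \<Rightarrow> (nat \<Rightarrow> 'k::field_char_0) \<Rightarrow> bool" where
  "nonint_rooted m c \<longleftrightarrow>
     nonint_simple m c = {} \<or> (D_connected m (nonint_simple m c) \<and> 1 \<in> nonint_simple m c)"

lemma mem_nonint_simple_iff: "i \<in> nonint_simple m c \<longleftrightarrow> i \<in> {1..m} \<and> c i \<notin> \<int>"
  unfolding nonint_simple_def by simp

lemma nonint_simple_subset: "nonint_simple m c \<subseteq> {1..m}"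
  unfolding nonint_simple_def by auto

lemma finite_nonint_simple [simp]: "finite (nonint_simple m c)"
  using nonint_simple_subset finite_subset by blast

lemma not_nonint_rooted_obtain:
  assumes "3 \<le> m" "\<not> nonint_rooted m c"
  obtains j where "j \<in> nonint_simple m c" "j \<noteq> 1" "tree_parent m j \<notin> nonint_simple m c"
  using connected_of_tree_parent_closed[OF assms(1) nonint_simple_subset, of c] assms(2)
  unfolding nonint_rooted_def by blast

text \<open>Reflecting at \<open>\<alpha>\<^sub>j\<close> can make integral only the (at most two) children of \<open>\<alpha>\<^sub>j\<close>, each of
  weight \<open>2\<^sup>m\<^sup>-\<^sup>j\<close>, while its parent, of weight \<open>2\<^sup>m\<^sup>-\<^sup>j\<^sup>+\<^sup>2\<close>, becomes non-integral.\<close>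

definition parent_weight :: "nat \<Rightarrow> nat \<Rightarrow> nat" where
  "parent_weight m i = 2 ^ (m - tree_parent m i)"

definition nonint_weight :: "nat \<Rightarrow> (nat \<Rightarrow> 'k::field_char_0) \<Rightarrow> nat" where
  "nonint_weight m c = (\<Sum>i\<in>nonint_simple m c. parent_weight m i)"

lemma children_weight_less:
  assumes m3: "3 \<le> m" and j: "j \<in> {2..m}"
  shows "(\<Sum>i\<in>{i\<in>{1..m}. tree_parent m i = j}. parent_weight m i) <
    parent_weight m (tree_parent m j)"
proof (cases "j < m")
  case True
  have children: "{i\<in>{1..m}. tree_parent m i = j} \<subseteq> {Suc j, m}" unfolding tree_parent_def by auto
  have "(\<Sum>i\<in>{i\<in>{1..m}. tree_parent m i = j}. parent_weight m i) =
      (\<Sum>i\<in>{i\<in>{1..m}. tree_parent m i = j}. 2 ^ (m - j))"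
    by (rule sum.cong) (auto simp: parent_weight_def)
  also have "\<dots> \<le> (\<Sum>i\<in>{Suc j, m}. 2 ^ (m - j))"
    using children by (intro sum_mono2) auto
  also have "\<dots> \<le> 2 * 2 ^ (m - j)" by (simp add: card_insert_le_m1 sum_constant)
  also have "\<dots> < 2 ^ Suc (Suc (m - j))" by simp
  also have "\<dots> = parent_weight m (tree_parent m j)"
  proof -
    have "m - tree_parent m (tree_parent m j) = Suc (Suc (m - j))"
      using True j unfolding tree_parent_def by auto
    then show ?thesis unfolding parent_weight_def by simp
  qed
  finally show ?thesis .
next
  case False
  with j m3 have "{i\<in>{1..m}. tree_parent m i = j} = {}" unfolding tree_parent_def by auto
  then show ?thesis unfolding parent_weight_def by (simp only: sum.empty) simp
qed

lemma nonint_simple_dot_refl_parent: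
  assumes m3: "3 \<le> m" and j: "j \<in> nonint_simple m c" "j \<noteq> 1"
    and parent: "tree_parent m j \<notin> nonint_simple m c"
  shows "tree_parent m j \<in> nonint_simple m (dot_refl m j c)"
proof -
  from j have j2: "j \<in> {2..m}" unfolding nonint_simple_def by force
  have "D_cartan m j (tree_parent m j) = -1"
    using tree_parent_props[OF m3 j2] unfolding D_cartan_def by auto
  then have "dot_refl m j c (tree_parent m j) = c (tree_parent m j) + (c j + 1)"
    by (simp add: dot_refl_def)
  with j parent tree_parent_props(3)[OF m3 j2] show ?thesis by (auto simp: mem_nonint_simple_iff)
qed

lemma nonint_simple_dot_refl_lost:
  assumes j: "j \<in> nonint_simple m c"
  shows "nonint_simple m c - nonint_simple m (dot_refl m j c) \<subseteq>
    {i\<in>{1..m}. tree_parent m i = j} \<union> {tree_parent m j}"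
proof
  fix i assume "i \<in> nonint_simple m c - nonint_simple m (dot_refl m j c)"
  then have i: "i \<in> {1..m}" "c i \<notin> \<int>" "dot_refl m j c i \<in> \<int>"
    by (auto simp: mem_nonint_simple_iff)
  have "i \<noteq> j"
  proof
    assume "i = j"
    with i(3) have "- c j - 2 \<in> \<int>" by (simp add: dot_refl_def algebra_simps)
    with j show False by (simp add: mem_nonint_simple_iff)
  qed
  moreover have "D_cartan m j i \<noteq> 0" using i by (auto simp: dot_refl_def)
  ultimately have "D_adj m j i" unfolding D_cartan_def by (auto split: if_splits)
  with i(1) show "i \<in> {i\<in>{1..m}. tree_parent m i = j} \<union> {tree_parent m j}"
    using D_adj_tree_parent by blast
qed

lemma nonint_weight_dot_refl_less:
  assumes m3: "3 \<le> m" and j: "j \<in> nonint_simple m c" "j \<noteq> 1"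
    and parent: "tree_parent m j \<notin> nonint_simple m c"
  shows "nonint_weight m c < nonint_weight m (dot_refl m j c)"
proof -
  define N where "N = nonint_simple m c"
  define N' where "N' = nonint_simple m (dot_refl m j c)"
  define p where "p = tree_parent m j"
  define children where "children = {i\<in>{1..m}. tree_parent m i = j}"
  from j have j2: "j \<in> {2..m}" unfolding nonint_simple_def by force
  have lost: "N - N' \<subseteq> children"
    using nonint_simple_dot_refl_lost[OF j(1)] parent unfolding N_def N'_def children_def by blast
  have "nonint_weight m c = (\<Sum>i\<in>N \<inter> N'. parent_weight m i) + (\<Sum>i\<in>N - N'. parent_weight m i)"
    unfolding nonint_weight_def N_def[symmetric] by (rule sum.Int_Diff) (simp add: N_def)
  also have "(\<Sum>i\<in>N - N'. parent_weight m i) \<le> (\<Sum>i\<in>children. parent_weight m i)"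
    using lost by (intro sum_mono2) (auto simp: children_def)
  also have "\<dots> < parent_weight m p"
    unfolding children_def p_def using children_weight_less[OF m3 j2] .
  also have "(\<Sum>i\<in>N \<inter> N'. parent_weight m i) + parent_weight m p =
      (\<Sum>i\<in>insert p (N \<inter> N'). parent_weight m i)"
    using parent unfolding N_def p_def by simp
  also have "\<dots> \<le> nonint_weight m (dot_refl m j c)"
    unfolding nonint_weight_def N'_def[symmetric]
    using nonint_simple_dot_refl_parent[OF m3 j parent] unfolding N'_def p_def
    by (intro sum_mono2) auto
  finally show ?thesis by simp
qed

lemma exists_admissible_word_nonint_rooted:
  fixes c :: "nat \<Rightarrow> 'k::field_char_0"
  assumes m3: "3 \<le> m"
  shows "\<exists>bs. admissible_word m bs c \<and> nonint_rooted m (dot_word m bs c)"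
proof -
  define B where "B = (\<Sum>i\<in>{1..m}. parent_weight m i)"
  have bounded: "nonint_weight m d \<le> B" for d :: "nat \<Rightarrow> 'k"
    unfolding nonint_weight_def B_def using nonint_simple_subset by (intro sum_mono2) auto
  show ?thesis
  proof (induction "B - nonint_weight m c" arbitrary: c rule: less_induct)
    case less
    show ?case
    proof (cases "nonint_rooted m c")
      case True
      then show ?thesis by (intro exI[of _ "[]"]) simp
    next
      case False
      then obtain j where j: "j \<in> nonint_simple m c" "j \<noteq> 1" "tree_parent m j \<notin> nonint_simple m c"
        using not_nonint_rooted_obtain[OF m3] by blast
      have "B - nonint_weight m (dot_refl m j c) < B - nonint_weight m c"
        using nonint_weight_dot_refl_less[OF m3 j] bounded[of "dot_refl m j c"] by simp
      then obtain bs where "admissible_word m bs (dot_refl m j c)"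
          "nonint_rooted m (dot_word m bs (dot_refl m j c))"
        using less by blast
      moreover have "j \<in> {1..m}" "c j \<notin> \<nat>"
        using j(1) Nats_subset_Ints by (auto simp: mem_nonint_simple_iff)
      ultimately show ?thesis by (intro exI[of _ "j # bs"]) (simp add: admissible_word_Cons)
    qed
  qed
qed

text \<open>The inner product with \<open>\<rho> = \<Sum>\<^sub>k (m - k) \<epsilon>\<^sub>k\<close>. As \<open>s\<^sub>j \<rho> = \<rho> - \<alpha>\<^sub>j\<close>, reflecting at \<open>\<alpha>\<^sub>j\<close>
  lowers it by the value of \<open>\<alpha>\<^sub>j\<^sup>\<or>\<close>.\<close>

definition rho_inner :: "nat \<Rightarrow> (nat \<Rightarrow> 'k::field_char_0) \<Rightarrow> 'k" where
  "rho_inner m x = (\<Sum>k\<in>{1..m}. of_nat (m - k) * x k)"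

lemma rho_inner_signed_refl:
  assumes m3: "3 \<le> m" and j: "j \<in> {1..m}"
  shows "rho_inner m (signed_refl m j x) = rho_inner m x - coroot_eval m x j"
proof -
  have diff: "rho_inner m (signed_refl m j x) - rho_inner m x =
      (\<Sum>k\<in>{1..m}. of_nat (m - k) * (signed_refl m j x k - x k))"
    unfolding rho_inner_def by (simp add: sum_subtractf[symmetric] algebra_simps)
  define moved where "moved = (if j < m then {j, Suc j} else {m - 1, m})"
  have "(\<Sum>k\<in>{1..m}. of_nat (m - k) * (signed_refl m j x k - x k)) =
      (\<Sum>k\<in>moved. of_nat (m - k) * (signed_refl m j x k - x k))"
    using j m3 unfolding moved_def
    by (intro sum.mono_neutral_right) (auto simp: signed_refl_def refl_sign_def refl_perm_def)
  also have "\<dots> = - coroot_eval m x j"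
  proof (cases "j < m")
    case True
    then have "m - j = Suc (m - Suc j)" by simp
    with True show ?thesis
      unfolding moved_def
      by (simp add: signed_refl_def refl_sign_def refl_perm_def coroot_eval_def algebra_simps)
  next
    case False
    with j m3 have "j = m" "m - (m - 1) = 1" by auto
    then show ?thesis
      unfolding moved_def
      by (simp add: signed_refl_def refl_sign_def refl_perm_def coroot_eval_def algebra_simps)
  qed
  finally show ?thesis using diff by (simp add: algebra_simps)
qed

lemma rho_inner_eps_coord_dot_refl:
  assumes m3: "3 \<le> m" and j: "j \<in> {1..m}"
  shows "rho_inner m (eps_coord m (dot_refl m j c)) = rho_inner m (eps_coord m c) - (c j + 1)"
proof -
  have "rho_inner m (eps_coord m (dot_refl m j c)) = rho_inner m (signed_refl m j (eps_coord m c))"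
    unfolding rho_inner_def by (rule sum.cong) (simp_all add: eps_coord_dot_refl[OF m3 j])
  also have "\<dots> = rho_inner m (eps_coord m c) - coroot_eval m (eps_coord m c) j"
    by (rule rho_inner_signed_refl[OF m3 j])
  also have "\<dots> = rho_inner m (eps_coord m c) - (c j + 1)"
    using coroot_eval_eps_coord[of m j c] m3 j by simp
  finally show ?thesis .
qed

lemma eps_coord_dot_refl_mem:
  assumes m3: "3 \<le> m" and j: "j \<in> {1..m}" and V: "\<And>v. v \<in> V \<Longrightarrow> - v \<in> V"
    and c: "\<forall>k\<in>{1..m}. eps_coord m c k \<in> V"
  shows "\<forall>k\<in>{1..m}. eps_coord m (dot_refl m j c) k \<in> V"
proof
  fix k assume k: "k \<in> {1..m}"
  then have "eps_coord m c (refl_perm m j k) \<in> V" using c refl_perm_range[OF _ j k] m3 by simp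
  then show "eps_coord m (dot_refl m j c) k \<in> V"
    using V signed_refl_cases[of m j "eps_coord m c" k] by (auto simp: eps_coord_dot_refl[OF m3 j k])
qed

lemma finite_rho_inner_values:
  assumes "finite V"
  shows "finite {rho_inner m x | x. \<forall>k\<in>{1..m}. x k \<in> V}"
proof (rule finite_subset)
  show "{rho_inner m x | x. \<forall>k\<in>{1..m}. x k \<in> V} \<subseteq> rho_inner m ` PiE {1..m} (\<lambda>_. V)"
  proof clarify
    fix x assume "\<forall>k\<in>{1..m}. x k \<in> V"
    then have "restrict x {1..m} \<in> PiE {1..m} (\<lambda>_. V)" by auto
    moreover have "rho_inner m (restrict x {1..m}) = rho_inner m x" unfolding rho_inner_def by simp
    ultimately show "rho_inner m x \<in> rho_inner m ` PiE {1..m} (\<lambda>_. V)" by (metis image_eqI)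
  qed
qed (use assms in \<open>simp add: finite_PiE\<close>)

lemma increase_by_nat_induct [consumes 2, case_names step]:
  fixes f :: "'s \<Rightarrow> 'k::ring_char_0"
  assumes fin: "finite {f s | s. I s}" and "I s"
    and step: "\<And>s. I s \<Longrightarrow> (\<And>s'. I s' \<Longrightarrow> (\<exists>n>0. f s' = f s + of_nat n) \<Longrightarrow> P s') \<Longrightarrow> P s"
  shows "P s"
proof -
  define above where "above s = {v \<in> {f s | s. I s}. \<exists>n>0. v = f s + of_nat n}" for s
  show ?thesis using \<open>I s\<close>
  proof (induction "card (above s)" arbitrary: s rule: less_induct)
    case less
    show ?case
    proof (rule step[OF less.prems])
      fix s' assume "I s'" and "\<exists>n>0. f s' = f s + of_nat n"
      then obtain n where n: "n > 0" "f s' = f s + of_nat n" by blast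
      have "above s' \<subseteq> above s"
      proof
        fix v assume "v \<in> above s'"
        then obtain n' where "v \<in> {f s | s. I s}" "n' > 0" "v = f s' + of_nat n'"
          unfolding above_def by blast
        with n have "v \<in> {f s | s. I s}" "n + n' > 0" "v = f s + of_nat (n + n')" by auto
        then show "v \<in> above s" unfolding above_def by blast
      qed
      moreover have "f s' \<in> above s - above s'"
      proof -
        have "f s' \<in> {f s | s. I s}" using \<open>I s'\<close> by blast
        with n show ?thesis unfolding above_def by auto
      qed
      moreover have "finite (above s)" using fin unfolding above_def by simp
      ultimately have "card (above s') < card (above s)" by (intro psubset_card_mono) auto
      then show "P s'" using less.hyps \<open>I s'\<close> by blast
    qed
  qed
qed

lemma nonint_simple_dot_refl_integral:
  assumes "c j + 1 = of_int z"
  shows "nonint_simple m (dot_refl m j c) = nonint_simple m c"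
proof -
  have "dot_refl m j c i = c i - of_int (z * D_cartan m j i)" for i
    using assms by (simp add: dot_refl_def)
  then show ?thesis unfolding mem_nonint_simple_iff set_eq_iff by simp
qed

lemma not_Nats_if_plus_one_neg_int:
  fixes x :: "'a::ring_char_0"
  assumes "z < 0" "x + 1 = of_int z"
  shows "x \<notin> \<nat>"
proof
  assume "x \<in> \<nat>"
  then obtain q where "x = of_nat q" by (auto elim: Nats_cases)
  with assms(2) have "of_int z = (of_int (int q + 1) :: 'a)" by simp
  with assms(1) show False by (simp only: of_int_eq_iff)
qed

definition no_neg_int_simple :: "nat \<Rightarrow> (nat \<Rightarrow> 'k::field_char_0) \<Rightarrow> bool" where
  "no_neg_int_simple m c \<longleftrightarrow> (\<forall>i\<in>{1..m}. \<forall>k::int. k < 0 \<longrightarrow> c i + 1 \<noteq> of_int k)"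

lemma exists_admissible_word_no_neg_int_simple:
  fixes c :: "nat \<Rightarrow> 'k::field_char_0"
  assumes m3: "3 \<le> m"
  shows "\<exists>bs. admissible_word m bs c \<and> nonint_simple m (dot_word m bs c) = nonint_simple m c
            \<and> no_neg_int_simple m (dot_word m bs c)"
proof -
  define V where "V = eps_coord m c ` {1..m} \<union> uminus ` eps_coord m c ` {1..m}"
  have V_uminus: "- v \<in> V" if "v \<in> V" for v using that unfolding V_def by force
  define I where "I d \<longleftrightarrow> (\<forall>k\<in>{1..m}. eps_coord m d k \<in> V)" for d :: "nat \<Rightarrow> 'k"
  define f where "f d = rho_inner m (eps_coord m d)" for d :: "nat \<Rightarrow> 'k"
  have fin: "finite {f d | d. I d}"
    using finite_rho_inner_values[of V m] unfolding V_def
    by (rule rev_finite_subset) (auto simp: f_def I_def V_def)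
  have "I c" unfolding I_def V_def by auto
  with fin show ?thesis
  proof (induction c rule: increase_by_nat_induct)
    case (step d)
    show ?case
    proof (cases "no_neg_int_simple m d")
      case True
      then show ?thesis by (intro exI[of _ "[]"]) simp
    next
      case False
      then obtain j z where j: "j \<in> {1..m}" and z: "z < 0" "d j + 1 = of_int z"
        unfolding no_neg_int_simple_def by blast
      from z have "d j \<notin> \<nat>" by (rule not_Nats_if_plus_one_neg_int)
      moreover have "I (dot_refl m j d)"
        using eps_coord_dot_refl_mem[OF m3 j V_uminus] step.hyps unfolding I_def by blast
      moreover have "nat (- z) > 0" "f (dot_refl m j d) = f d + of_nat (nat (- z))"
        unfolding f_def rho_inner_eps_coord_dot_refl[OF m3 j] z(2) using z(1) by simp_all
      ultimately obtain bs where "admissible_word m bs (dot_refl m j d)"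
          "nonint_simple m (dot_word m bs (dot_refl m j d)) = nonint_simple m (dot_refl m j d)"
          "no_neg_int_simple m (dot_word m bs (dot_refl m j d))"
        using step.IH by blast
      then show ?thesis using j \<open>d j \<notin> \<nat>\<close> nonint_simple_dot_refl_integral[of d j z, OF z(2)]
        by (intro exI[of _ "j # bs"]) (simp add: admissible_word_Cons)
    qed
  qed
qed

lemma of_int_mem_subring:
  assumes "subring R"
  shows "(of_int z :: 'k::field_char_0) \<in> R"
proof -
  have nat: "(of_nat n :: 'k) \<in> R" for n
    using assms by (induction n) (auto simp: subring_def)
  show ?thesis
  proof (cases z rule: int_cases)
    case (neg n)
    have "0 - of_nat (Suc n) \<in> R" using assms nat unfolding subring_def by blast
    with neg show ?thesis by simp
  qed (use nat in simp)
qed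

lemma integral_cond_dot_refl:
  fixes c :: "nat \<Rightarrow> 'k::field_char_0"
  assumes R: "subring R" and j: "j \<in> {1..m}" and c: "integral_cond m p n R c"
  shows "integral_cond m p n R (dot_refl m j c)"
  unfolding integral_cond_def
proof
  fix i assume i: "i \<in> {1..m}"
  define P where "P = (of_nat p ^ n :: 'k)"
  have "P \<in> R" "of_int (D_cartan m j i) \<in> R"
    unfolding P_def using of_int_mem_subring[OF R, of "int p ^ n"] of_int_mem_subring[OF R]
    by simp_all
  moreover have "P * c i \<in> R" "P * c j \<in> R" using c i j unfolding integral_cond_def P_def by auto
  ultimately have "P * c i - (P * c j + P) * of_int (D_cartan m j i) \<in> R"
    using R unfolding subring_def by blast
  then show "of_nat p ^ n * dot_refl m j c i \<in> R"
    unfolding P_def dot_refl_def by (simp add: algebra_simps)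
qed

lemma integral_cond_dot_word:
  "subring R \<Longrightarrow> set bs \<subseteq> {1..m} \<Longrightarrow> integral_cond m p n R c \<Longrightarrow>
    integral_cond m p n R (dot_word m bs c)"
  by (induction bs arbitrary: c) (auto simp: integral_cond_dot_refl)

theorem proposition3p54:
  fixes m p n :: nat and R :: "'k::field_char_0 set" and c :: "nat \<Rightarrow> 'k"
  assumes "m \<ge> 3"
    and "prime p" and "odd p"
    and "subring R"
    and "integral_cond m p n R c"
    and "\<not> regular_integral m c"
  shows "\<exists>bs. set bs \<subseteq> {1..m}
           \<and> (\<forall>i<length bs. dot_word m (take i bs) c (bs ! i) \<notin> \<nat>)
           \<and> dot_word m bs c \<in> S_g m p n R"
proof -
  obtain bs1 where bs1: "admissible_word m bs1 c" "nonint_rooted m (dot_word m bs1 c)"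
    using exists_admissible_word_nonint_rooted[OF assms(1)] by blast
  obtain bs2 where bs2: "admissible_word m bs2 (dot_word m bs1 c)"
      "nonint_simple m (dot_word m (bs1 @ bs2) c) = nonint_simple m (dot_word m bs1 c)"
      "no_neg_int_simple m (dot_word m (bs1 @ bs2) c)"
    using exists_admissible_word_no_neg_int_simple[OF assms(1)] unfolding dot_word_append by blast
  define bs where "bs = bs1 @ bs2"
  have admissible: "admissible_word m bs c"
    unfolding bs_def admissible_word_append using bs1 bs2 by simp
  then have letters: "set bs \<subseteq> {1..m}" unfolding admissible_word_def by simp
  have "\<not> (\<forall>i\<in>{1..m}. dot_word m bs c i \<in> \<nat>)"
    using dominant_integral_imp_regular_integral[OF assms(1)]
      regular_integral_dot_word_imp[OF letters] assms(6) by blast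
  moreover have "nonint_rooted m (dot_word m bs c)"
    using bs1(2) bs2(2) unfolding bs_def nonint_rooted_def by simp
  ultimately have "dot_word m bs c \<in> S_g m p n R"
    using integral_cond_dot_word[OF assms(4) letters assms(5)] bs2(3)
    unfolding S_g_def nonint_rooted_def no_neg_int_simple_def bs_def by simp
  with admissible show ?thesis unfolding admissible_word_def by blast
qed

end
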